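(* Let $n\ge1$ and let $\alpha_1,\ldots,\alpha_n,\beta_1,\beta_2,\gamma_1,\ldots,\gamma_n$ be complex parameters such that none of $\gamma_1,\ldots,\gamma_n,\beta_1+\beta_2$ is a non-positive integer. Then for $(s_1,s_2)$ with $|s_1|<1$, $|s_2|<1$ and $|s_1|+|1-s_1/s_2|<1$, \[ F_2^{(n)}\left[\begin{array}{c}\alpha_1,\ldots,\alpha_n,\beta_2,\beta_1+\beta_2\\\gamma_1,\ldots,\gamma_n,\beta_1+\beta_2\end{array};s_1,1-\frac{s_1}{s_2}\right]=s_1^{-\beta_2}s_2^{\beta_2}\,F_{n+1,2}\left[\begin{array}{c}\alpha_1,\ldots,\alpha_n,\beta_1,\beta_2\\\gamma_1,\ldots,\gamma_n\end{array};s_1,s_2\right], \] where $s_1^{-\beta_2}s_2^{\beta_2}$ means $(s_1/s_2)^{-\beta_2}$ taken with the principal branch (note $|1-s_1/s_2|<1$).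
   Context: $(x)_i=\Gamma(x+i)/\Gamma(x)$ is the Pochhammer symbol. For parameters $b_1,\ldots,b_n,b',a,c_1,\ldots,c_n,c'$, \[ F_2^{(n)}\left[\begin{array}{c}b_1,\ldots,b_n,b',a\\c_1,\ldots,c_n,c'\end{array};x,y\right]=\sum_{i,j=0}^\infty\frac{(b_1)_i\cdots(b_n)_i(b')_j(a)_{i+j}}{(c_1)_i\cdots(c_n)_i(c')_j(1)_i(1)_j}x^iy^j, \] convergent for $|x|+|y|<1$. For parameters $\alpha_1,\ldots,\alpha_n,\beta_1,\beta_2,\gamma_1,\ldots,\gamma_n$, \[ F_{n+1,2}\left[\begin{array}{c}\alpha_1,\ldots,\alpha_n,\beta_1,\beta_2\\\gamma_1,\ldots,\gamma_n\end{array};s_1,s_2\right]=\sum_{i,j=0}^\infty\frac{(\alpha_1)_{i+j}\cdots(\alpha_n)_{i+j}(\beta_1)_i(\beta_2)_j}{(\gamma_1)_{i+j}\cdots(\gamma_n)_{i+j}(1)_i(1)_j}s_1^is_2^j, \] convergent for $|s_1|<1$, $|s_2|<1$. *)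

theory Defs
  imports "HOL-Analysis.Analysis"
begin

text \<open>Parameter families b_1..b_n are given as functions nat => complex; only the
values at indices k < n matter. Double series are unordered (absolutely convergent)
sums over nat x nat.\<close>

definition F2n :: "nat \<Rightarrow> (nat \<Rightarrow> complex) \<Rightarrow> complex \<Rightarrow> complex \<Rightarrow>
    (nat \<Rightarrow> complex) \<Rightarrow> complex \<Rightarrow> complex \<Rightarrow> complex \<Rightarrow> complex" where
  "F2n n b b' a c c' x y =
     (\<Sum>\<^sub>\<infinity>(i,j)\<in>UNIV.
        ((\<Prod>k<n. pochhammer (b k) i) * pochhammer b' j * pochhammer a (i + j)) /
        ((\<Prod>k<n. pochhammer (c k) i) * pochhammer c' j * pochhammer 1 i * pochhammer 1 j)
        * x ^ i * y ^ j)"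

definition Fn12 :: "nat \<Rightarrow> (nat \<Rightarrow> complex) \<Rightarrow> complex \<Rightarrow> complex \<Rightarrow>
    (nat \<Rightarrow> complex) \<Rightarrow> complex \<Rightarrow> complex \<Rightarrow> complex" where
  "Fn12 n \<alpha> \<beta>1 \<beta>2 \<gamma> s1 s2 =
     (\<Sum>\<^sub>\<infinity>(i,j)\<in>UNIV.
        ((\<Prod>k<n. pochhammer (\<alpha> k) (i + j)) * pochhammer \<beta>1 i * pochhammer \<beta>2 j) /
        ((\<Prod>k<n. pochhammer (\<gamma> k) (i + j)) * pochhammer 1 i * pochhammer 1 j)
        * s1 ^ i * s2 ^ j)"

end

theory Submission
  imports Defs
begin

text \<open>
  Let \<open>P N\<close> be the ratio of the Pochhammer products and \<open>z = s1 / s2\<close>. As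
  \<open>(\<beta>1 + \<beta>2)_(i+j) / (\<beta>1 + \<beta>2)_j = (\<beta>1 + \<beta>2 + j)_i\<close>, summing the left-hand side over
  \<open>j\<close> first and expanding \<open>(\<beta>1 + \<beta>2 + j)_i\<close> by Chu-Vandermonde turns each row into a finite
  combination of binomial series \<open>\<Sum>j. (\<beta>2 + m)_j (1 - z)^j / j! = z powr (- \<beta>2 - m)\<close>.
  This gives \<open>z powr (- \<beta>2) * (\<Sum>N. P N * s1^N * c_N)\<close> with \<open>c_N\<close> the coefficient of \<open>t^N\<close>
  in \<open>(1 - t) powr (- \<beta>1) * (1 - t / z) powr (- \<beta>2)\<close>, and summing the right-hand side along
  the diagonals \<open>i + j = N\<close> gives the same series. All rearrangements are justified by
  absolute convergence, since every Pochhammer ratio grows subexponentially.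
\<close>

definition subexp_growth :: "('a \<Rightarrow> nat) \<Rightarrow> ('a \<Rightarrow> 'b::real_normed_vector) \<Rightarrow> bool" where
  "subexp_growth len F \<longleftrightarrow> (\<forall>q>1. \<exists>C. \<forall>x. norm (F x) \<le> C * q ^ len x)"

lemma subexp_growthD:
  assumes "subexp_growth len F" "q > 1"
  obtains C where "C \<ge> 0" "\<And>x. norm (F x) \<le> C * q ^ len x"
proof -
  obtain C where C: "\<And>x. norm (F x) \<le> C * q ^ len x"
    using assms unfolding subexp_growth_def by blast
  have "0 \<le> C * q ^ len undefined"
    using C[of undefined] norm_ge_zero order_trans by blast
  moreover have "0 < q ^ len undefined"
    using assms(2) by simp
  ultimately have "C \<ge> 0"
    by (auto simp: zero_le_mult_iff)
  then show thesis using C by (rule that)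
qed

lemma subexp_growth_compose:
  assumes "subexp_growth len F" "\<And>x. len (g x) \<le> len' x"
  shows "subexp_growth len' (\<lambda>x. F (g x))"
  unfolding subexp_growth_def
proof (intro allI impI)
  fix q :: real assume q: "q > 1"
  obtain C where C: "C \<ge> 0" "\<And>y. norm (F y) \<le> C * q ^ len y"
    using subexp_growthD[OF assms(1) q] by blast
  have "norm (F (g x)) \<le> C * q ^ len' x" for x
    using C(2)[of "g x"] mult_left_mono[OF power_increasing[OF assms(2)[of x] less_imp_le[OF q]] C(1)]
    by linarith
  then show "\<exists>C. \<forall>x. norm (F (g x)) \<le> C * q ^ len' x" by blast
qed

lemma subexp_growth_mult:
  fixes F G :: "'a \<Rightarrow> 'b::real_normed_algebra"
  assumes "subexp_growth len F" "subexp_growth len G"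
  shows "subexp_growth len (\<lambda>x. F x * G x)"
  unfolding subexp_growth_def
proof (intro allI impI)
  fix q :: real assume q: "q > 1"
  then have sq: "sqrt q > 1" by simp
  obtain C1 where C1: "C1 \<ge> 0" "\<And>x. norm (F x) \<le> C1 * sqrt q ^ len x"
    using subexp_growthD[OF assms(1) sq] by blast
  obtain C2 where C2: "C2 \<ge> 0" "\<And>x. norm (G x) \<le> C2 * sqrt q ^ len x"
    using subexp_growthD[OF assms(2) sq] by blast
  have "norm (F x * G x) \<le> (C1 * C2) * q ^ len x" for x
  proof -
    have "norm (F x * G x) \<le> norm (F x) * norm (G x)" by (rule norm_mult_ineq)
    also have "\<dots> \<le> (C1 * sqrt q ^ len x) * (C2 * sqrt q ^ len x)"
      using C1 C2 sq by (intro mult_mono) auto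
    also have "\<dots> = (C1 * C2) * (sqrt q * sqrt q) ^ len x"
      by (simp only: power_mult_distrib mult_ac)
    also have "\<dots> = (C1 * C2) * q ^ len x" using q by simp
    finally show ?thesis .
  qed
  then show "\<exists>C. \<forall>x. norm (F x * G x) \<le> C * q ^ len x" by blast
qed

lemma subexp_growth_prod:
  fixes F :: "'i \<Rightarrow> 'a \<Rightarrow> 'b::real_normed_field"
  assumes "finite K" "\<And>k. k \<in> K \<Longrightarrow> subexp_growth len (F k)"
  shows "subexp_growth len (\<lambda>x. \<Prod>k\<in>K. F k x)"
  using assms
proof (induction K rule: finite_induct)
  case empty
  show ?case by (auto simp: subexp_growth_def intro!: exI[of _ 1] one_le_power)
next
  case (insert k K)
  then show ?case by (simp add: subexp_growth_mult)
qed

lemma power_bound_if_eventually_ratio_le: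
  fixes F :: "nat \<Rightarrow> 'a::real_normed_vector"
  assumes q: "q > 0" and ratio: "eventually (\<lambda>N. norm (F (Suc N)) \<le> q * norm (F N)) sequentially"
  shows "\<exists>C. \<forall>N. norm (F N) \<le> C * q ^ N"
proof -
  obtain N0 where N0: "\<And>N. N \<ge> N0 \<Longrightarrow> norm (F (Suc N)) \<le> q * norm (F N)"
    using ratio unfolding eventually_sequentially by blast
  define C where "C = (\<Sum>N\<le>N0. norm (F N) / q ^ N)"
  have initial: "norm (F N) \<le> C * q ^ N" if "N \<le> N0" for N
  proof -
    have "norm (F N) / q ^ N \<le> C"
      unfolding C_def using that q by (intro member_le_sum) auto
    then show ?thesis using q by (simp add: field_simps)
  qed
  have "norm (F N) \<le> C * q ^ N" if "N \<ge> N0" for N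
    using that
  proof (induction N rule: dec_induct)
    case base
    then show ?case by (rule initial) simp
  next
    case (step N)
    have "norm (F (Suc N)) \<le> q * norm (F N)" using N0 step(1) .
    also have "\<dots> \<le> q * (C * q ^ N)" using step(3) q by simp
    finally show ?case by (simp add: mult_ac)
  qed
  with initial show ?thesis by (metis nat_le_linear)
qed

lemma tendsto_shifted_ratio:
  "(\<lambda>N. (a + of_nat N) / (c + of_nat N) :: 'a::real_normed_field) \<longlonglongrightarrow> 1"
proof (rule Lim_transform_eventually)
  show "eventually (\<lambda>N. (a * inverse (of_nat N) + 1) / (c * inverse (of_nat N) + 1)
          = (a + of_nat N) / (c + of_nat N)) sequentially"
    using eventually_gt_at_top[of "0::nat"]
  proof eventually_elim
    case (elim N)
    then have "a * inverse (of_nat N) + 1 = (a + of_nat N) * inverse (of_nat N)"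
      and "c * inverse (of_nat N) + 1 = (c + of_nat N) * inverse (of_nat N)"
      by (simp_all add: distrib_right)
    then show ?case
      using elim by simp
  qed
  have "(\<lambda>N. (a * inverse (of_nat N) + 1) / (c * inverse (of_nat N) + 1) :: 'a)
          \<longlonglongrightarrow> (a * 0 + 1) / (c * 0 + 1)"
    by (intro tendsto_intros lim_inverse_n) simp
  then show "(\<lambda>N. (a * inverse (of_nat N) + 1) / (c * inverse (of_nat N) + 1) :: 'a) \<longlonglongrightarrow> 1"
    by simp
qed

lemma subexp_growth_pochhammer_ratio:
  fixes a c :: "'a::real_normed_field"
  assumes c: "c \<notin> \<int>\<^sub>\<le>\<^sub>0"
  shows "subexp_growth id (\<lambda>N. pochhammer a N / pochhammer c N)"
  unfolding subexp_growth_def id_def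
proof (intro allI impI)
  fix q :: real assume q: "q > 1"
  have "pochhammer c (Suc N) \<noteq> 0" for N
    using c by (auto simp: pochhammer_eq_0_iff)
  then have step: "pochhammer a (Suc N) / pochhammer c (Suc N)
      = pochhammer a N / pochhammer c N * ((a + of_nat N) / (c + of_nat N))" for N
    by (simp add: pochhammer_Suc)
  have "eventually (\<lambda>N. norm ((a + of_nat N) / (c + of_nat N)) < q) sequentially"
    using tendsto_norm[OF tendsto_shifted_ratio] q by (intro order_tendstoD) auto
  then have "eventually (\<lambda>N. norm (pochhammer a (Suc N) / pochhammer c (Suc N))
      \<le> q * norm (pochhammer a N / pochhammer c N)) sequentially"
  proof eventually_elim
    case (elim N)
    have "norm (pochhammer a (Suc N) / pochhammer c (Suc N))
        = norm (pochhammer a N / pochhammer c N) * norm ((a + of_nat N) / (c + of_nat N))"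
      by (simp only: step norm_mult)
    also have "\<dots> \<le> norm (pochhammer a N / pochhammer c N) * q"
      using elim by (intro mult_left_mono) auto
    finally show ?case by (simp add: mult.commute)
  qed
  then show "\<exists>C. \<forall>N. norm (pochhammer a N / pochhammer c N) \<le> C * q ^ N"
    using q by (intro power_bound_if_eventually_ratio_le) auto
qed

lemma subexp_growth_pochhammer_over_fact:
  "subexp_growth id (\<lambda>N. pochhammer a N / fact N :: 'a::real_normed_field)"
  using subexp_growth_pochhammer_ratio[of 1 a] by (simp add: pochhammer_fact)

lemma subexp_growth_fact_over_pochhammer:
  "(a::'a::real_normed_field) \<notin> \<int>\<^sub>\<le>\<^sub>0 \<Longrightarrow> subexp_growth id (\<lambda>N. fact N / pochhammer a N)"
  using subexp_growth_pochhammer_ratio[of a 1] by (simp add: pochhammer_fact)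

lemma summable_on_geometric_pairs:
  fixes r :: real
  assumes "0 \<le> r" "r < 1"
  shows "(\<lambda>(i::nat, j::nat). r ^ i * r ^ j) summable_on UNIV"
proof -
  have geom: "((\<lambda>j::nat. r ^ j) has_sum (1 / (1 - r))) UNIV"
    using assms by (intro sums_nonneg_imp_has_sum) (auto intro: geometric_sums)
  have "summable (\<lambda>i::nat. r ^ i * (1 / (1 - r)))"
    using assms by (intro summable_mult2) (simp add: summable_geometric)
  then have "(\<lambda>i::nat. r ^ i * (1 / (1 - r))) summable_on UNIV"
    using assms by (subst summable_on_UNIV_nonneg_real_iff) auto
  then have "(\<lambda>(i, j). r ^ i * r ^ j) summable_on Sigma (UNIV::nat set) (\<lambda>_. UNIV::nat set)"
    using assms has_sum_cmult_right[OF geom]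
    by (intro summable_on_SigmaI[where g = "\<lambda>i. r ^ i * (1 / (1 - r))"]) auto
  then show ?thesis by simp
qed

lemma summable_on_pairs_subexp_geometric:
  fixes f :: "nat \<times> nat \<Rightarrow> 'a::banach" and H :: "nat \<times> nat \<Rightarrow> 'b::real_normed_vector"
  assumes H: "subexp_growth (\<lambda>(i, j). i + j) H" and \<rho>: "0 \<le> \<rho>" "\<rho> < 1"
    and bound: "\<And>i j. norm (f (i, j)) \<le> norm (H (i, j)) * \<rho> ^ (i + j)"
  shows "f summable_on UNIV"
proof -
  define q where "q = 2 / (1 + \<rho>)"
  define r where "r = q * \<rho>"
  have q: "q > 1" and r: "0 \<le> r" "r < 1"
    using \<rho> by (simp_all add: q_def r_def field_simps)
  obtain C where C: "C \<ge> 0" "\<And>x. norm (H x) \<le> C * q ^ (case x of (i, j) \<Rightarrow> i + j)"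
    using subexp_growthD[OF H q] by blast
  have bound_geom: "norm (f (i, j)) \<le> C * (r ^ i * r ^ j)" for i j
  proof -
    have "norm (f (i, j)) \<le> C * q ^ (i + j) * \<rho> ^ (i + j)"
      using bound[of i j] mult_right_mono[OF C(2)[of "(i, j)", simplified] zero_le_power[OF \<rho>(1)]]
      by (rule order_trans)
    also have "\<dots> = C * (r ^ i * r ^ j)"
      by (simp add: r_def power_add power_mult_distrib mult_ac)
    finally show ?thesis .
  qed
  have "(\<lambda>x. C * (case x of (i, j) \<Rightarrow> r ^ i * r ^ j)) summable_on UNIV"
    using summable_on_geometric_pairs[OF r] by (rule summable_on_cmult_right)
  then have "(\<lambda>x. norm (f x)) summable_on UNIV"
    by (rule summable_on_comparison_test) (auto simp: bound_geom)
  then show ?thesis by (rule abs_summable_summable)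
qed

lemma binomial_term_le_power:
  fixes x y :: real
  assumes "0 \<le> x" "0 \<le> y"
  shows "of_nat ((i + j) choose i) * x ^ i * y ^ j \<le> (x + y) ^ (i + j)"
proof -
  have "of_nat ((i + j) choose i) * x ^ i * y ^ (i + j - i)
      \<le> (\<Sum>k\<le>i + j. of_nat ((i + j) choose k) * x ^ k * y ^ (i + j - k))"
    using assms by (intro member_le_sum) auto
  then show ?thesis by (simp add: binomial_ring)
qed

text \<open>Summands of \<open>F2n\<close> and \<open>Fn12\<close>, with the ratio of the Pochhammer products of the
  \<open>n\<close> parameter families abstracted to a coefficient sequence \<open>P\<close>; in \<open>F2_term\<close> the
  lower parameter \<open>c'\<close> is taken equal to \<open>a\<close>.\<close>

definition F2_term ::
    "(nat \<Rightarrow> complex) \<Rightarrow> complex \<Rightarrow> complex \<Rightarrow> complex \<Rightarrow> complex \<Rightarrow> nat \<times> nat \<Rightarrow> complex"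
where
  "F2_term P b a x y = (\<lambda>(i, j).
     P i * (pochhammer b j * pochhammer a (i + j)) / (pochhammer a j * fact i * fact j) * x ^ i * y ^ j)"

definition Fn12_term ::
    "(nat \<Rightarrow> complex) \<Rightarrow> complex \<Rightarrow> complex \<Rightarrow> complex \<Rightarrow> complex \<Rightarrow> nat \<times> nat \<Rightarrow> complex"
where
  "Fn12_term P \<beta>1 \<beta>2 x y = (\<lambda>(i, j).
     P (i + j) * (pochhammer \<beta>1 i * pochhammer \<beta>2 j) / (fact i * fact j) * x ^ i * y ^ j)"

lemma F2_term_summable:
  assumes P: "subexp_growth id P" and a: "a \<notin> \<int>\<^sub>\<le>\<^sub>0" and xy: "norm x + norm y < 1"
  shows "F2_term P b a x y summable_on UNIV"
proof -
  define H where "H p = P (fst p) * (pochhammer b (snd p) / fact (snd p))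
      * (pochhammer a (fst p + snd p) / fact (fst p + snd p)) * (fact (snd p) / pochhammer a (snd p))"
    for p :: "nat \<times> nat"
  let ?len = "\<lambda>(i::nat, j::nat). i + j"
  have "subexp_growth ?len (\<lambda>p. P (fst p))"
    by (rule subexp_growth_compose[OF P]) auto
  moreover have "subexp_growth ?len (\<lambda>p. pochhammer b (snd p) / fact (snd p))"
    by (rule subexp_growth_compose[OF subexp_growth_pochhammer_over_fact]) auto
  moreover have "subexp_growth ?len (\<lambda>p. pochhammer a (fst p + snd p) / fact (fst p + snd p))"
    by (rule subexp_growth_compose[OF subexp_growth_pochhammer_over_fact]) auto
  moreover have "subexp_growth ?len (\<lambda>p. fact (snd p) / pochhammer a (snd p))"
    by (rule subexp_growth_compose[OF subexp_growth_fact_over_pochhammer[OF a]]) auto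
  ultimately have H_growth: "subexp_growth ?len H"
    unfolding H_def by (intro subexp_growth_mult)
  \<comment> \<open>\<open>(a)_(i+j) / ((a)_j i!)\<close> grows exponentially; the binomial coefficient carries that growth.\<close>
  have split: "F2_term P b a x y (i, j) = H (i, j) * (of_nat ((i + j) choose i) * x ^ i * y ^ j)" for i j
  proof -
    have "pochhammer a j \<noteq> 0"
      using a by (auto simp: pochhammer_eq_0_iff)
    moreover have "of_nat ((i + j) choose i) = (fact (i + j) / (fact i * fact j) :: complex)"
      by (simp add: binomial_fact)
    ultimately show ?thesis
      by (simp add: F2_term_def H_def field_simps)
  qed
  have "norm (F2_term P b a x y (i, j)) \<le> norm (H (i, j)) * (norm x + norm y) ^ (i + j)" for i j
    unfolding split norm_mult
    using binomial_term_le_power[of "norm x" "norm y" i j]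
    by (intro mult_left_mono) (auto simp: norm_power)
  then show ?thesis
    using H_growth xy by (intro summable_on_pairs_subexp_geometric) auto
qed

lemma Fn12_term_summable:
  assumes P: "subexp_growth id P" and "norm x < 1" "norm y < 1"
  shows "Fn12_term P \<beta>1 \<beta>2 x y summable_on UNIV"
proof -
  define H where "H p = P (fst p + snd p) * (pochhammer \<beta>1 (fst p) / fact (fst p))
      * (pochhammer \<beta>2 (snd p) / fact (snd p))" for p :: "nat \<times> nat"
  define m where "m = max (norm x) (norm y)"
  let ?len = "\<lambda>(i::nat, j::nat). i + j"
  have "subexp_growth ?len (\<lambda>p. P (fst p + snd p))"
    by (rule subexp_growth_compose[OF P]) auto
  moreover have "subexp_growth ?len (\<lambda>p. pochhammer \<beta>1 (fst p) / fact (fst p))"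
    by (rule subexp_growth_compose[OF subexp_growth_pochhammer_over_fact]) auto
  moreover have "subexp_growth ?len (\<lambda>p. pochhammer \<beta>2 (snd p) / fact (snd p))"
    by (rule subexp_growth_compose[OF subexp_growth_pochhammer_over_fact]) auto
  ultimately have H_growth: "subexp_growth ?len H"
    unfolding H_def by (intro subexp_growth_mult)
  have "norm (Fn12_term P \<beta>1 \<beta>2 x y (i, j)) \<le> norm (H (i, j)) * m ^ (i + j)" for i j
  proof -
    have "norm (x ^ i * y ^ j) \<le> m ^ i * m ^ j"
      unfolding norm_mult norm_power m_def by (intro mult_mono power_mono) (auto simp: le_max_iff_disj)
    then have "norm (H (i, j) * (x ^ i * y ^ j)) \<le> norm (H (i, j)) * m ^ (i + j)"
      unfolding norm_mult power_add by (intro mult_left_mono) auto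
    then show ?thesis
      by (simp add: Fn12_term_def H_def field_simps)
  qed
  then show ?thesis
    using H_growth assms by (intro summable_on_pairs_subexp_geometric[where \<rho> = m]) (auto simp: m_def le_max_iff_disj)
qed

lemma sums_pochhammer_binomial:
  fixes b z :: complex
  assumes "z \<noteq> 0" "norm (1 - z) < 1"
  shows "(\<lambda>l. pochhammer b l / fact l * (1 - z) ^ l) sums (z powr (- b))"
proof -
  have "(\<lambda>l. ((- b) gchoose l) * (- (1 - z)) ^ l) sums (1 + (- (1 - z))) powr (- b)"
    using assms by (intro gen_binomial_complex) (simp add: norm_minus_commute)
  moreover have "((- b) gchoose l) * (- (1 - z)) ^ l = pochhammer b l / fact l * (1 - z) ^ l" for l
  proof -
    have "((- b) gchoose l) = (- 1) ^ l * pochhammer b l / fact l"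
      by (simp add: gbinomial_pochhammer)
    then have "((- b) gchoose l) * (- (1 - z)) ^ l
        = ((- 1) ^ l * (- 1) ^ l) * (pochhammer b l / fact l * (1 - z) ^ l)"
      unfolding power_minus[of "1 - z"] by (simp add: mult_ac)
    also have "(- 1 :: complex) ^ l * (- 1) ^ l = 1"
      by (simp flip: power_mult_distrib)
    finally show ?thesis by simp
  qed
  ultimately show ?thesis by simp
qed

lemma powr_minus_add_of_nat:
  fixes z b :: complex
  assumes "z \<noteq> 0"
  shows "z powr (- (b + of_nat m)) = z powr (- b) * inverse z ^ m"
proof -
  have "z powr (- (b + of_nat m)) = z powr (- b) * z powr (- of_nat m)"
    by (simp add: powr_add[symmetric])
  also have "z powr (- of_nat m) = inverse z ^ m"
    using assms by (simp add: powr_minus powr_nat' power_inverse)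
  finally show ?thesis .
qed

lemma pochhammer_over_fact_convolution:
  fixes a c :: complex
  shows "(\<Sum>m\<le>N. pochhammer a (N - m) / fact (N - m) * (pochhammer c m / fact m))
       = pochhammer (a + c) N / fact N"
proof -
  have "pochhammer (c + a) N = (\<Sum>m\<le>N. of_nat (N choose m) * pochhammer c m * pochhammer a (N - m))"
    by (rule pochhammer_binomial_sum)
  also have "\<dots> = (\<Sum>m\<le>N. fact N * (pochhammer a (N - m) / fact (N - m) * (pochhammer c m / fact m)))"
    by (intro sum.cong refl) (simp add: binomial_fact field_simps)
  also have "\<dots> = fact N * (\<Sum>m\<le>N. pochhammer a (N - m) / fact (N - m) * (pochhammer c m / fact m))"
    by (simp add: sum_distrib_left)
  finally show ?thesis
    by (simp add: field_simps add.commute)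
qed

text \<open>The coefficient of \<open>t ^ N\<close> in \<open>(1 - t) powr (- \<beta>1) * (1 - u * t) powr (- \<beta>2)\<close>.\<close>

definition binomial_product_coeff :: "complex \<Rightarrow> complex \<Rightarrow> complex \<Rightarrow> nat \<Rightarrow> complex" where
  "binomial_product_coeff \<beta>1 \<beta>2 u N =
     (\<Sum>m\<le>N. pochhammer \<beta>1 (N - m) / fact (N - m) * (pochhammer \<beta>2 m / fact m) * u ^ m)"

lemma sums_F2_row:
  fixes b \<beta>1 z :: complex
  assumes z: "z \<noteq> 0" "norm (1 - z) < 1"
  shows "(\<lambda>j. pochhammer b j / fact j * (pochhammer (\<beta>1 + b + of_nat j) N / fact N) * (1 - z) ^ j)
           sums (z powr (- b) * binomial_product_coeff \<beta>1 b (inverse z) N)"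
proof -
  define c where "c m = pochhammer \<beta>1 (N - m) / fact (N - m) * (pochhammer b m / fact m)" for m
  have "(\<lambda>j. \<Sum>m\<le>N. c m * (pochhammer (b + of_nat m) j / fact j * (1 - z) ^ j))
          sums (\<Sum>m\<le>N. c m * z powr (- (b + of_nat m)))"
    by (intro sums_sum sums_mult sums_pochhammer_binomial z)
  moreover have "(\<Sum>m\<le>N. c m * (pochhammer (b + of_nat m) j / fact j * (1 - z) ^ j))
      = pochhammer b j / fact j * (pochhammer (\<beta>1 + b + of_nat j) N / fact N) * (1 - z) ^ j" for j
  proof -
    have swap: "pochhammer b m * pochhammer (b + of_nat m) j = pochhammer b j * pochhammer (b + of_nat j) m"
      for m
      by (metis add.commute pochhammer_product')
    have "(\<Sum>m\<le>N. c m * (pochhammer (b + of_nat m) j / fact j * (1 - z) ^ j))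
        = pochhammer b j / fact j * (1 - z) ^ j
          * (\<Sum>m\<le>N. pochhammer \<beta>1 (N - m) / fact (N - m) * (pochhammer (b + of_nat j) m / fact m))"
      unfolding sum_distrib_left c_def
      by (intro sum.cong refl) (simp add: field_simps swap)
    also have "\<dots> = pochhammer b j / fact j * (1 - z) ^ j * (pochhammer (\<beta>1 + (b + of_nat j)) N / fact N)"
      by (simp only: pochhammer_over_fact_convolution)
    finally show ?thesis
      by (simp add: add.assoc mult_ac)
  qed
  moreover have "(\<Sum>m\<le>N. c m * z powr (- (b + of_nat m)))
      = z powr (- b) * binomial_product_coeff \<beta>1 b (inverse z) N"
    unfolding binomial_product_coeff_def sum_distrib_left c_def powr_minus_add_of_nat[OF z(1)]
    by (intro sum.cong refl) (simp add: mult_ac)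
  ultimately show ?thesis by simp
qed

lemma infsum_F2_term_rows:
  assumes summable: "F2_term P b (\<beta>1 + b) x (1 - z) summable_on UNIV"
    and a: "\<beta>1 + b \<notin> \<int>\<^sub>\<le>\<^sub>0" and z: "z \<noteq> 0" "norm (1 - z) < 1"
  shows "infsum (F2_term P b (\<beta>1 + b) x (1 - z)) UNIV
       = z powr (- b) * infsum (\<lambda>i. P i * x ^ i * binomial_product_coeff \<beta>1 b (inverse z) i) UNIV"
proof -
  let ?f = "F2_term P b (\<beta>1 + b) x (1 - z)"
  have row: "?f (i, j) = P i * x ^ i
      * (pochhammer b j / fact j * (pochhammer (\<beta>1 + b + of_nat j) i / fact i) * (1 - z) ^ j)" for i j
  proof -
    have "pochhammer (\<beta>1 + b) (i + j) = pochhammer (\<beta>1 + b) j * pochhammer (\<beta>1 + b + of_nat j) i"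
      by (metis add.commute pochhammer_product')
    moreover have "pochhammer (\<beta>1 + b) j \<noteq> 0"
      using a by (auto simp: pochhammer_eq_0_iff)
    ultimately show ?thesis
      by (simp add: F2_term_def field_simps)
  qed
  have row_sum: "infsum (\<lambda>j. ?f (i, j)) UNIV
      = z powr (- b) * (P i * x ^ i * binomial_product_coeff \<beta>1 b (inverse z) i)" for i
  proof -
    have "(\<lambda>j. ?f (i, j)) summable_on UNIV"
      using summable_on_SigmaD1[of "\<lambda>i j. ?f (i, j)" UNIV "\<lambda>_. UNIV" i] summable by simp
    then have "(\<lambda>j. ?f (i, j)) sums infsum (\<lambda>j. ?f (i, j)) UNIV"
      by (intro has_sum_imp_sums has_sum_infsum)
    moreover have "(\<lambda>j. ?f (i, j)) sums (P i * x ^ i * (z powr (- b) * binomial_product_coeff \<beta>1 b (inverse z) i))"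
      unfolding row by (intro sums_mult sums_F2_row z)
    ultimately show ?thesis
      by (simp add: sums_unique2 mult_ac)
  qed
  have "infsum ?f UNIV = infsum (\<lambda>i. infsum (\<lambda>j. ?f (i, j)) UNIV) UNIV"
    using infsum_Sigma_banach[of "\<lambda>(i, j). ?f (i, j)" UNIV "\<lambda>_. UNIV"] summable by simp
  also have "\<dots> = z powr (- b) * infsum (\<lambda>i. P i * x ^ i * binomial_product_coeff \<beta>1 b (inverse z) i) UNIV"
    by (simp only: row_sum infsum_cmult_right')
  finally show ?thesis .
qed

lemma infsum_Fn12_term_diagonals:
  assumes summable: "Fn12_term P \<beta>1 \<beta>2 x y summable_on UNIV" and x: "x \<noteq> 0"
  shows "infsum (Fn12_term P \<beta>1 \<beta>2 x y) UNIV
       = infsum (\<lambda>N. P N * x ^ N * binomial_product_coeff \<beta>1 \<beta>2 (y / x) N) UNIV"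
proof -
  let ?f = "Fn12_term P \<beta>1 \<beta>2 x y"
  have diag: "bij_betw (\<lambda>(N::nat, k). (N - k, k)) (SIGMA N:UNIV. {..N}) UNIV"
    by (rule bij_betw_byWitness[where f' = "\<lambda>(i, j). (i + j, j)"]) auto
  have diag_sum: "(\<Sum>k\<le>N. ?f (N - k, k)) = P N * x ^ N * binomial_product_coeff \<beta>1 \<beta>2 (y / x) N" for N
    unfolding binomial_product_coeff_def sum_distrib_left
  proof (intro sum.cong refl)
    fix k assume "k \<in> {..N}"
    then have "x ^ N = x ^ (N - k) * x ^ k"
      by (simp flip: power_add)
    then show "?f (N - k, k) = P N * x ^ N * (pochhammer \<beta>1 (N - k) / fact (N - k)
        * (pochhammer \<beta>2 k / fact k) * (y / x) ^ k)"
      using \<open>k \<in> {..N}\<close> x by (simp add: Fn12_term_def power_divide field_simps)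
  qed
  have "infsum ?f UNIV = infsum (\<lambda>(N, k). ?f (N - k, k)) (SIGMA N:UNIV. {..N})"
    using infsum_reindex_bij_betw[OF diag, of ?f] by (simp add: case_prod_unfold)
  also have "\<dots> = infsum (\<lambda>N. \<Sum>k\<le>N. ?f (N - k, k)) UNIV"
  proof -
    have "(\<lambda>(N, k). ?f (N - k, k)) summable_on (SIGMA N:UNIV. {..N})"
      using summable_on_reindex_bij_betw[OF diag, of ?f] summable by (simp add: case_prod_unfold)
    from infsum_Sigma_banach[OF this] show ?thesis by simp
  qed
  also have "\<dots> = infsum (\<lambda>N. P N * x ^ N * binomial_product_coeff \<beta>1 \<beta>2 (y / x) N) UNIV"
    by (simp only: diag_sum)
  finally show ?thesis .
qed

theorem F2_Fn12_transformation:
  assumes P: "subexp_growth id P" and a: "\<beta>1 + \<beta>2 \<notin> \<int>\<^sub>\<le>\<^sub>0"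
    and s: "norm s1 < 1" "norm s2 < 1" "norm s1 + norm (1 - s1 / s2) < 1"
  shows "infsum (F2_term P \<beta>2 (\<beta>1 + \<beta>2) s1 (1 - s1 / s2)) UNIV
       = (s1 / s2) powr (- \<beta>2) * infsum (Fn12_term P \<beta>1 \<beta>2 s1 s2) UNIV"
proof -
  have "s1 \<noteq> 0" "s2 \<noteq> 0"
    using s(3) by auto
  moreover have "norm (1 - s1 / s2) < 1"
    using s(3) norm_ge_zero[of s1] by linarith
  ultimately show ?thesis
    using F2_term_summable[OF P a s(3)] Fn12_term_summable[OF P s(1,2)]
    by (simp add: infsum_F2_term_rows[OF _ a] infsum_Fn12_term_diagonals)
qed

theorem corollary6p3:
  fixes n :: nat and \<alpha> \<gamma> :: "nat \<Rightarrow> complex" and \<beta>1 \<beta>2 s1 s2 :: complex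
  assumes "n \<ge> 1"
    and "\<forall>k<n. \<gamma> k \<notin> \<int>\<^sub>\<le>\<^sub>0"
    and "\<beta>1 + \<beta>2 \<notin> \<int>\<^sub>\<le>\<^sub>0"
    and "norm s1 < 1" and "norm s2 < 1"
    and "norm s1 + norm (1 - s1 / s2) < 1"
  shows "F2n n \<alpha> \<beta>2 (\<beta>1 + \<beta>2) \<gamma> (\<beta>1 + \<beta>2) s1 (1 - s1 / s2)
         = (s1 / s2) powr (- \<beta>2) * Fn12 n \<alpha> \<beta>1 \<beta>2 \<gamma> s1 s2"
proof -
  define P where "P N = (\<Prod>k<n. pochhammer (\<alpha> k) N) / (\<Prod>k<n. pochhammer (\<gamma> k) N)" for N
  have "P = (\<lambda>N. \<Prod>k<n. pochhammer (\<alpha> k) N / pochhammer (\<gamma> k) N)"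
    by (simp add: P_def fun_eq_iff prod_dividef)
  then have P_growth: "subexp_growth id P"
    using assms(2) by (auto intro!: subexp_growth_prod subexp_growth_pochhammer_ratio)
  have "F2n n \<alpha> \<beta>2 (\<beta>1 + \<beta>2) \<gamma> (\<beta>1 + \<beta>2) s1 (1 - s1 / s2)
      = infsum (F2_term P \<beta>2 (\<beta>1 + \<beta>2) s1 (1 - s1 / s2)) UNIV"
    unfolding F2n_def F2_term_def P_def by (simp add: pochhammer_fact mult_ac)
  moreover have "Fn12 n \<alpha> \<beta>1 \<beta>2 \<gamma> s1 s2 = infsum (Fn12_term P \<beta>1 \<beta>2 s1 s2) UNIV"
    unfolding Fn12_def Fn12_term_def P_def by (simp add: pochhammer_fact mult_ac)
  ultimately show ?thesis
    using F2_Fn12_transformation[OF P_growth assms(3-6)] by simp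
qed

end
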